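(* Let $A=(a_{ij})\in\mathbb{R}^{n\times n}$ ($n\ge2$) be pseudo-diagonalizable and suppose there exists $k\in[n]$ such that $a_{kk}\ge0$ and $a_{ii}\le0$ for all $i\ne k$. Then $\lambda(A)=a_{kk}$ and $V(A)=\{\alpha\otimes A_k:\alpha\in\overline{\mathbb{R}}\}$, where $A_k$ is the $k$-th column of $A$.
   Context: Max-plus conventions: $\overline{\mathbb{R}}=\mathbb{R}\cup\{-\infty\}$, $\varepsilon=-\infty$, $\oplus=\max$, $\otimes=+$; $(A\otimes x)_i=\max_j(A_{ij}+x_j)$, $(\alpha\otimes x)_i=\alpha+x_i$. A matrix $P$ is invertible iff it has exactly one real entry in each row and column (others $\varepsilon$); $A,B$ are similar if $B=P^{-1}\otimes A\otimes P$ for invertible $P$. Pseudo-diagonal: real diagonal entries, off-diagonal entries equal to real $0$; pseudo-diagonalizable: similar to a pseudo-diagonal matrix. For finite $A$, $\lambda(A)$ is the maximum cycle mean $\max\{(a_{i_1i_2}+\dots+a_{i_{m-1}i_m}+a_{i_mi_1})/m\}$ over $m\ge1$ and distinct $i_1,\dots,i_m\in[n]$, which is the unique max-plus eigenvalue of $A$; $V(A)=\{x\in\overline{\mathbb{R}}^n: A\otimes x=\lambda(A)\otimes x\}$ is the eigenspace (containing the all-$\varepsilon$ vector). *)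

theory Defs
  imports Complex_Main "HOL-Library.Extended_Real"
begin

text \<open>Max-plus algebra over R-bar = R \<union> {-\<infinity>}, represented inside ereal
  by the elements different from PInfty. Indices range over a finite type 'n
  (so [n] corresponds to the elements of 'n, n = CARD('n)).\<close>

definition mp_mult :: "('a \<Rightarrow> 'b::finite \<Rightarrow> ereal) \<Rightarrow> ('b \<Rightarrow> 'c \<Rightarrow> ereal) \<Rightarrow> 'a \<Rightarrow> 'c \<Rightarrow> ereal" where
  "mp_mult P Q = (\<lambda>i j. Max (range (\<lambda>k. P i k + Q k j)))"

definition mp_mv :: "('a \<Rightarrow> 'b::finite \<Rightarrow> ereal) \<Rightarrow> ('b \<Rightarrow> ereal) \<Rightarrow> 'a \<Rightarrow> ereal" where
  "mp_mv A x = (\<lambda>i. Max (range (\<lambda>j. A i j + x j)))"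

definition mp_id :: "'n \<Rightarrow> 'n \<Rightarrow> ereal" where
  "mp_id = (\<lambda>i j. if i = j then 0 else -\<infinity>)"

definition mp_matrix :: "('n \<Rightarrow> 'm \<Rightarrow> ereal) \<Rightarrow> bool" where
  "mp_matrix P \<longleftrightarrow> (\<forall>i j. P i j \<noteq> \<infinity>)"

definition mp_invertible :: "('n \<Rightarrow> 'n \<Rightarrow> ereal) \<Rightarrow> bool" where
  "mp_invertible P \<longleftrightarrow> mp_matrix P \<and>
     (\<forall>i. \<exists>!j. P i j \<noteq> -\<infinity>) \<and> (\<forall>j. \<exists>!i. P i j \<noteq> -\<infinity>)"

text \<open>Similarity B = P^{-1} \<otimes> A \<otimes> P, where Q plays the role of P^{-1}
  (the two-sided max-plus inverse of P).\<close>
definition mp_similar :: "('n::finite \<Rightarrow> 'n \<Rightarrow> ereal) \<Rightarrow> ('n \<Rightarrow> 'n \<Rightarrow> ereal) \<Rightarrow> bool" where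
  "mp_similar A B \<longleftrightarrow> (\<exists>P Q. mp_invertible P \<and> mp_matrix Q \<and>
      mp_mult P Q = mp_id \<and> mp_mult Q P = mp_id \<and> B = mp_mult (mp_mult Q A) P)"

definition pseudo_diagonal :: "('n \<Rightarrow> 'n \<Rightarrow> ereal) \<Rightarrow> bool" where
  "pseudo_diagonal D \<longleftrightarrow> (\<forall>i. \<bar>D i i\<bar> \<noteq> \<infinity>) \<and> (\<forall>i j. i \<noteq> j \<longrightarrow> D i j = 0)"

definition pseudo_diagonalizable :: "('n::finite \<Rightarrow> 'n \<Rightarrow> real) \<Rightarrow> bool" where
  "pseudo_diagonalizable A \<longleftrightarrow>
     (\<exists>D. pseudo_diagonal D \<and> mp_similar (\<lambda>i j. ereal (A i j)) D)"

definition cycle_mean :: "('n \<Rightarrow> 'n \<Rightarrow> real) \<Rightarrow> 'n list \<Rightarrow> real" where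
  "cycle_mean A cs = (\<Sum>i<length cs. A (cs ! i) (cs ! ((i + 1) mod length cs))) / real (length cs)"

definition max_cycle_mean :: "('n::finite \<Rightarrow> 'n \<Rightarrow> real) \<Rightarrow> real" where
  "max_cycle_mean A = Max {cycle_mean A cs | cs. cs \<noteq> [] \<and> distinct cs}"

definition mp_eigenspace :: "('n::finite \<Rightarrow> 'n \<Rightarrow> real) \<Rightarrow> ('n \<Rightarrow> ereal) set" where
  "mp_eigenspace A = {x. (\<forall>i. x i \<noteq> \<infinity>) \<and>
     mp_mv (\<lambda>i j. ereal (A i j)) x = (\<lambda>i. ereal (max_cycle_mean A) + x i)}"

end

theory Submission
  imports Defs
begin

text \<open>Writing an invertible P as a permutation with real weights p, the similarity
  Q \<otimes> A \<otimes> P only permutes A and replaces a(a,b) by a(a,b) - p(a) + p(b); since the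
  result has zero off-diagonal entries, A is a potential matrix off the diagonal:
  a(a,b) = p(a) - p(b) for a \<noteq> b. Every cycle of length at least two then has weight
  zero, so only the loops count and \<lambda>(A) = a(k,k). For a finite eigenvector x, row k
  of the eigen-equation gives x(a) - a(a,k) \<le> x(k) - a(k,k) for all a; when a(k,k) > 0,
  at a row a \<noteq> k maximising x(a) - a(a,k) the maximum can only be attained at column k,
  which gives the reverse inequality, so x is a multiple of the k-th column.\<close>

lemma Max_range_eq_iff:
  fixes f :: "'a::finite \<Rightarrow> 'b::linorder"
  shows "Max (range f) = c \<longleftrightarrow> (\<forall>j. f j \<le> c) \<and> (\<exists>j. f j = c)"
  by (auto simp: Max_eq_iff)

lemma Max_range_eq_single:
  fixes f :: "'a::finite \<Rightarrow> ereal"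
  assumes "\<And>j. j \<noteq> i \<Longrightarrow> f j = -\<infinity>"
  shows "Max (range f) = f i"
  using assms by (metis Max_range_eq_iff MInfty_eq_minfinity ereal_less_eq(2) order_refl)

lemma mp_invertible_obtain_weighted_permutation:
  assumes "mp_invertible P"
  obtains \<sigma> p where "\<And>i. P i (\<sigma> i) = ereal (p i)"
    and "\<And>i j. j \<noteq> \<sigma> i \<Longrightarrow> P i j = -\<infinity>"
    and "\<And>i j. i \<noteq> j \<Longrightarrow> P i (\<sigma> j) = -\<infinity>"
proof -
  have fin: "P i j \<noteq> \<infinity>" for i j
    using assms unfolding mp_invertible_def mp_matrix_def by blast
  have row: "\<exists>!j. P i j \<noteq> -\<infinity>" for i
    using assms unfolding mp_invertible_def by blast
  have col: "\<And>i l j. P l j \<noteq> -\<infinity> \<Longrightarrow> P i j \<noteq> -\<infinity> \<Longrightarrow> l = i"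
    using assms unfolding mp_invertible_def by blast
  obtain \<sigma> where \<sigma>: "\<And>i. P i (\<sigma> i) \<noteq> -\<infinity>" using row by metis
  show thesis
  proof
    show "P i (\<sigma> i) = ereal (real_of_ereal (P i (\<sigma> i)))" for i
      using \<sigma>[of i] fin[of i "\<sigma> i"] by (cases "P i (\<sigma> i)") auto
    show "j \<noteq> \<sigma> i \<Longrightarrow> P i j = -\<infinity>" for i j using row \<sigma> by metis
    show "i \<noteq> j \<Longrightarrow> P i (\<sigma> j) = -\<infinity>" for i j using col \<sigma> by metis
  qed
qed

context
  fixes P Q :: "'n::finite \<Rightarrow> 'n \<Rightarrow> ereal" and \<sigma> :: "'n \<Rightarrow> 'n" and p :: "'n \<Rightarrow> real"
  assumes P_diag: "\<And>i. P i (\<sigma> i) = ereal (p i)"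
    and P_row: "\<And>i j. j \<noteq> \<sigma> i \<Longrightarrow> P i j = -\<infinity>"
    and P_col: "\<And>i j. i \<noteq> j \<Longrightarrow> P i (\<sigma> j) = -\<infinity>"
begin

lemma mp_right_inverse_rows:
  assumes Q: "mp_matrix Q" and "mp_mult P Q = mp_id"
  shows "Q (\<sigma> a) m = (if m = a then ereal (- p a) else -\<infinity>)"
proof -
  have Q_fin: "Q i j \<noteq> \<infinity>" for i j using Q unfolding mp_matrix_def by blast
  have "mp_mult P Q a m = P a (\<sigma> a) + Q (\<sigma> a) m"
    unfolding mp_mult_def by (rule Max_range_eq_single) (simp add: P_row Q_fin)
  then have "ereal (p a) + Q (\<sigma> a) m = mp_id a m" using assms(2) by (simp add: P_diag)
  then show ?thesis using Q_fin[of "\<sigma> a" m]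
    by (cases "Q (\<sigma> a) m") (auto simp: mp_id_def split: if_splits)
qed

lemma mp_conjugate_weighted_permutation:
  fixes A :: "'n \<Rightarrow> 'n \<Rightarrow> ereal"
  assumes "mp_matrix Q" and "mp_mult P Q = mp_id" and A: "mp_matrix A"
  shows "mp_mult (mp_mult Q A) P (\<sigma> a) (\<sigma> b) = ereal (- p a) + A a b + ereal (p b)"
proof -
  have QA: "mp_mult Q A (\<sigma> a) l = ereal (- p a) + A a l" for l
  proof -
    have "mp_mult Q A (\<sigma> a) l = Q (\<sigma> a) a + A a l"
      unfolding mp_mult_def
      using A unfolding mp_matrix_def
      by (intro Max_range_eq_single) (simp add: mp_right_inverse_rows[OF assms(1,2)])
    then show ?thesis by (simp add: mp_right_inverse_rows[OF assms(1,2)])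
  qed
  have "mp_mult (mp_mult Q A) P (\<sigma> a) (\<sigma> b) = mp_mult Q A (\<sigma> a) b + P b (\<sigma> b)"
    unfolding mp_mult_def[of "mp_mult Q A" P]
    by (rule Max_range_eq_single) (use A in \<open>simp add: P_col QA mp_matrix_def\<close>)
  then show ?thesis by (simp add: QA P_diag)
qed

end

lemma pseudo_diagonalizable_offdiag_potential:
  fixes A :: "'n::finite \<Rightarrow> 'n \<Rightarrow> real"
  assumes "pseudo_diagonalizable A"
  obtains p where "\<And>a b. a \<noteq> b \<Longrightarrow> A a b = p a - p b"
proof -
  obtain D P Q where D: "pseudo_diagonal D" and P: "mp_invertible P" and Q: "mp_matrix Q"
    and PQ: "mp_mult P Q = mp_id" and D_eq: "D = mp_mult (mp_mult Q (\<lambda>i j. ereal (A i j))) P"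
    using assms unfolding pseudo_diagonalizable_def mp_similar_def by blast
  obtain \<sigma> p where \<sigma>p: "\<And>i. P i (\<sigma> i) = ereal (p i)" "\<And>i j. j \<noteq> \<sigma> i \<Longrightarrow> P i j = -\<infinity>"
    "\<And>i j. i \<noteq> j \<Longrightarrow> P i (\<sigma> j) = -\<infinity>"
    using mp_invertible_obtain_weighted_permutation[OF P] by metis
  have "A a b = p a - p b" if "a \<noteq> b" for a b
  proof -
    have "\<sigma> a \<noteq> \<sigma> b" using \<sigma>p(1)[of a] \<sigma>p(3)[OF that] by (metis MInfty_neq_ereal(1))
    then have "D (\<sigma> a) (\<sigma> b) = 0" using D unfolding pseudo_diagonal_def by blast
    then show ?thesis
      using mp_conjugate_weighted_permutation[OF \<sigma>p Q PQ, of "\<lambda>i j. ereal (A i j)" a b]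
      unfolding mp_matrix_def
      by (simp add: D_eq zero_ereal_def)
  qed
  then show thesis by (rule that)
qed

lemma sum_lessThan_Suc_mod:
  fixes f :: "nat \<Rightarrow> 'a::comm_monoid_add"
  shows "(\<Sum>i<m. f ((i + 1) mod m)) = (\<Sum>i<m. f i)"
proof (cases m)
  case (Suc n)
  have "(\<Sum>i<Suc n. f ((i + 1) mod Suc n)) = (\<Sum>i<n. f ((i + 1) mod Suc n)) + f 0"
    by (simp add: sum.lessThan_Suc)
  also have "(\<Sum>i<n. f ((i + 1) mod Suc n)) = (\<Sum>i<n. f (Suc i))"
    by (rule sum.cong) auto
  also have "(\<Sum>i<n. f (Suc i)) + f 0 = (\<Sum>i<Suc n. f i)"
    by (subst sum.lessThan_Suc_shift) (simp add: add.commute)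
  finally show ?thesis using Suc by simp
qed simp

lemma cycle_mean_offdiag_potential:
  fixes A :: "'n \<Rightarrow> 'n \<Rightarrow> real"
  assumes pot: "\<And>a b. a \<noteq> b \<Longrightarrow> A a b = p a - p b"
    and "distinct cs" and "length cs \<ge> 2"
  shows "cycle_mean A cs = 0"
proof -
  define m where "m = length cs"
  have step_ne: "cs ! i \<noteq> cs ! ((i + 1) mod m)" if "i < m" for i
  proof -
    have "i \<noteq> (i + 1) mod m"
      using that \<open>length cs \<ge> 2\<close> by (cases "i + 1 = m") (auto simp: m_def)
    moreover have "(i + 1) mod m < m" using that by simp
    ultimately show ?thesis
      using that \<open>distinct cs\<close> by (simp add: m_def nth_eq_iff_index_eq)
  qed
  have "(\<Sum>i<m. A (cs ! i) (cs ! ((i + 1) mod m)))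
      = (\<Sum>i<m. p (cs ! i) - p (cs ! ((i + 1) mod m)))"
    by (rule sum.cong) (use step_ne pot in auto)
  also have "\<dots> = 0"
    using sum_lessThan_Suc_mod[of "\<lambda>i. p (cs ! i)" m] by (simp add: sum_subtractf)
  finally show ?thesis unfolding cycle_mean_def m_def by simp
qed

lemma finite_cycle_means:
  fixes A :: "'n::finite \<Rightarrow> 'n \<Rightarrow> real"
  shows "finite {cycle_mean A cs | cs. cs \<noteq> [] \<and> distinct cs}"
proof -
  have "finite {xs::'n list. set xs \<subseteq> UNIV \<and> distinct xs}"
    by (rule finite_subset_distinct) simp
  then show ?thesis
    by (rule finite_subset[rotated, OF finite_imageI]) auto
qed

context
  fixes A :: "'n::finite \<Rightarrow> 'n \<Rightarrow> real" and p :: "'n \<Rightarrow> real" and k :: 'n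
  assumes pot: "\<And>a b. a \<noteq> b \<Longrightarrow> A a b = p a - p b"
    and diag_k: "A k k \<ge> 0"
    and diag_other: "\<And>i. i \<noteq> k \<Longrightarrow> A i i \<le> 0"
begin

lemma max_cycle_mean_offdiag_potential: "max_cycle_mean A = A k k"
  unfolding max_cycle_mean_def
proof (rule Max_eqI[OF finite_cycle_means])
  show "y \<le> A k k" if y_in: "y \<in> {cycle_mean A cs | cs. cs \<noteq> [] \<and> distinct cs}" for y
  proof -
    obtain cs where y: "y = cycle_mean A cs" and "cs \<noteq> []" "distinct cs" using y_in by blast
    show ?thesis
    proof (cases "length cs \<ge> 2")
      case True
      then show ?thesis using y cycle_mean_offdiag_potential[OF pot \<open>distinct cs\<close>] diag_k by simp
    next
      case False
      then obtain c where "cs = [c]"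
        using \<open>cs \<noteq> []\<close> by (cases cs) (auto simp: Suc_le_eq)
      then show ?thesis using y diag_k by (cases "c = k") (auto simp: cycle_mean_def dest: diag_other)
    qed
  qed
  have "cycle_mean A [k] = A k k" by (simp add: cycle_mean_def)
  then show "A k k \<in> {cycle_mean A cs | cs. cs \<noteq> [] \<and> distinct cs}"
    by (metis (mono_tags, lifting) distinct_singleton list.distinct(1) mem_Collect_eq)
qed

lemma mp_eigenspace_iff:
  "x \<in> mp_eigenspace A \<longleftrightarrow> (\<forall>i. x i \<noteq> \<infinity>) \<and>
     (\<forall>a. (\<forall>j. ereal (A a j) + x j \<le> ereal (A k k) + x a) \<and>
          (\<exists>j. ereal (A a j) + x j = ereal (A k k) + x a))"
  unfolding mp_eigenspace_def mp_mv_def max_cycle_mean_offdiag_potential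
  by (simp add: fun_eq_iff Max_range_eq_iff)

lemma path_le_column: "A a j + A j k \<le> A k k + A a k"
  using pot diag_k diag_other[of a] by (cases "a = k"; cases "j = k"; cases "j = a") auto

lemma column_multiple_in_mp_eigenspace:
  assumes "\<alpha> \<noteq> \<infinity>"
  shows "(\<lambda>i. \<alpha> + ereal (A i k)) \<in> mp_eigenspace A"
proof (cases \<alpha>)
  case (real r)
  have "A a j + (r + A j k) \<le> A k k + (r + A a k)" for a j
    using path_le_column[of a j] by simp
  then show ?thesis unfolding mp_eigenspace_iff real by (auto intro: exI[of _ k])
qed (use assms in \<open>simp_all add: mp_eigenspace_iff\<close>)

lemma real_eigenvector_eq_column:
  fixes r :: "'n \<Rightarrow> real"
  assumes le: "\<And>a j. A a j + r j \<le> A k k + r a"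
    and attained: "\<And>a. \<exists>j. A a j + r j = A k k + r a"
  shows "r i = r k - A k k + A i k"
proof (cases "i = k")
  case ik: False
  have "r i \<le> r k - A k k + A i k"
  proof (cases "A k k = 0")
    case True
    then show ?thesis using le[of k i] pot ik by auto
  next
    case False
    define s where "s j = r j - A j k" for j
    have "Max (s ` (UNIV - {k})) \<in> s ` (UNIV - {k})" using ik by (intro Max_in) auto
    then obtain i0 where "i0 \<noteq> k" and i0: "s i0 = Max (s ` (UNIV - {k}))"
      by (metis DiffD2 imageE singletonI)
    have i0_max: "s j \<le> s i0" if "j \<noteq> k" for j
      unfolding i0 using that by (intro Max_ge) auto
    obtain j where j: "A i0 j + r j = A k k + r i0" using attained by blast
    txt \<open>Since a(k,k) > 0, the maximum at row i0 cannot be attained on the diagonal,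
      nor at some other j \<noteq> k, which would exceed the maximality of s i0.\<close>
    have "j = k"
    proof (rule ccontr)
      assume "j \<noteq> k"
      moreover have "j \<noteq> i0" using j diag_other[OF \<open>i0 \<noteq> k\<close>] diag_k False by auto
      ultimately show False
        using j i0_max[of j] pot[of i0 j] pot[of j k] pot[of i0 k] \<open>i0 \<noteq> k\<close> diag_k False
        by (simp add: s_def)
    qed
    then show ?thesis using j i0_max[OF ik] by (simp add: s_def)
  qed
  then show ?thesis using le[of i k] by simp
qed simp

lemma mp_eigenspace_subset_column_multiples:
  assumes "x \<in> mp_eigenspace A"
  shows "\<exists>\<alpha>. \<alpha> \<noteq> \<infinity> \<and> x = (\<lambda>i. \<alpha> + ereal (A i k))"
proof -
  have fin: "\<And>i. x i \<noteq> \<infinity>"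
    and le: "\<And>a j. ereal (A a j) + x j \<le> ereal (A k k) + x a"
    and attained: "\<And>a. \<exists>j. ereal (A a j) + x j = ereal (A k k) + x a"
    using assms unfolding mp_eigenspace_iff by blast+
  show ?thesis
  proof (cases "x k = -\<infinity>")
    case True
    have "x i = -\<infinity>" for i using le[of k i] True by (cases "x i") auto
    then show ?thesis by (intro exI[of _ "-\<infinity>"]) auto
  next
    case False
    define r where "r i = real_of_ereal (x i)" for i
    have xr: "x i = ereal (r i)" for i
      using le[of i k] False fin[of k] fin[of i] unfolding r_def by (cases "x k"; cases "x i") auto
    have r_eq: "r i = r k - A k k + A i k" for i
    proof (rule real_eigenvector_eq_column)
      show "A a j + r j \<le> A k k + r a" for a j using le[of a j] by (simp add: xr)
      show "\<exists>j. A a j + r j = A k k + r a" for a using attained[of a] by (simp add: xr)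
    qed
    have "x = (\<lambda>i. ereal (r k - A k k) + ereal (A i k))"
    proof
      show "x i = ereal (r k - A k k) + ereal (A i k)" for i using r_eq[of i] by (simp add: xr)
    qed
    then show ?thesis by (intro exI[of _ "ereal (r k - A k k)"]) simp
  qed
qed

end

theorem corollary4p20:
  fixes A :: "'n::finite \<Rightarrow> 'n \<Rightarrow> real" and k :: 'n
  assumes "card (UNIV :: 'n set) \<ge> 2"
    and "pseudo_diagonalizable A"
    and "A k k \<ge> 0"
    and "\<forall>i. i \<noteq> k \<longrightarrow> A i i \<le> 0"
  shows "max_cycle_mean A = A k k \<and>
         mp_eigenspace A = {x. \<exists>\<alpha>::ereal. \<alpha> \<noteq> \<infinity> \<and> x = (\<lambda>i. \<alpha> + ereal (A i k))}"
proof -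
  obtain p where pot: "\<And>a b. a \<noteq> b \<Longrightarrow> A a b = p a - p b"
    using pseudo_diagonalizable_offdiag_potential[OF assms(2)] by blast
  note facts = pot assms(3) assms(4)[rule_format]
  show ?thesis
    using max_cycle_mean_offdiag_potential[of A p k, OF facts]
      mp_eigenspace_subset_column_multiples[of A p k, OF facts]
      column_multiple_in_mp_eigenspace[of A p k, OF facts]
    by blast
qed

end
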